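(* Let $L\subseteq\Sigma^\omega$ be of the form $L=\bigcup_{i=1}^n U_iV_i^\omega$ where each $U_i\subseteq\Sigma^*$ is Parikh-recognizable and each $V_i\subseteq\Sigma^*$ is regular. Then $L$ is LPBA-recognizable.
   Context: For $V\subseteq\Sigma^*$, $V^\omega=\{w_1w_2\cdots\mid w_i\in V\setminus\{\varepsilon\}\}$. A semi-linear set in $\mathbb{N}^d$ (resp. $(\mathbb{N}\cup\{\infty\})^d$) is a finite union of sets $\{b_0+\sum_{j=1}^\ell b_jz_j\mid z_j\in\mathbb{N}\}$ with $b_j\in\mathbb{N}^d$ (resp. $(\mathbb{N}\cup\{\infty\})^d$), with arithmetic $z+\infty=\infty+z=\infty+\infty=\infty$, $z\cdot\infty=\infty\cdot z=\infty$ for $z>0$, $0\cdot\infty=\infty\cdot0=0$. A Parikh automaton (PA) of dimension $d$ is $(Q,\Sigma,q_0,\Delta,F,C)$ with finite $Q$, $q_0\in Q$, $F\subseteq Q$, finite $\Delta\subseteq Q\times\Sigma\times\mathbb{N}^d\times Q$, semi-linear $C\subseteq\mathbb{N}^d$; it accepts a finite word $x_1\cdots x_n$ if there is a run $r_i=(p_{i-1},x_i,\mathbf{v}_i,p_i)\in\Delta$, $p_0=q_0$, with $p_n\in F$ and $\sum_i\mathbf{v}_i\in C$; Parikh-recognizable languages are those accepted by PA. A limit Parikh–Büchi automaton (LPBA) is such a tuple but with $C\subseteq(\mathbb{N}\cup\{\infty\})^d$ semi-linear; a run $r_1r_2\cdots$ on an infinite word ($r_i=(p_{i-1},\alpha_i,\mathbf{v}_i,p_i)$,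 $p_0=q_0$) is accepting if $p_i\in F$ for infinitely many $i$ and $\rho(r)\in C$, where the $j$-th component of $\rho(r)$ is $\infty$ if infinitely many $\mathbf{v}_i$ have nonzero $j$-th component and otherwise is the finite sum of the $j$-th components. $L$ is LPBA-recognizable if it is the set of infinite words with an accepting run of some LPBA. *)

theory Defs
  imports Main "HOL-Library.Extended_Nat" "HOL-Library.Omega_Words_Fun"
begin

definition vadd :: "'b::semiring_1 list \<Rightarrow> 'b list \<Rightarrow> 'b list" where
  "vadd xs ys = map2 (+) xs ys"

definition smult :: "'b::semiring_1 \<Rightarrow> 'b list \<Rightarrow> 'b list" where
  "smult c xs = map ((*) c) xs"

text \<open>Linear set with base b0 and periods Ps: b0 + sum_j z_j * b_j, z_j natural.
  Arithmetic on enat satisfies the conventions of the paper (0 * infinity = 0).\<close>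
definition lin_set :: "'b::semiring_1 list \<Rightarrow> 'b list list \<Rightarrow> 'b list set" where
  "lin_set b0 Ps = {foldr vadd (map2 (\<lambda>z p. smult (of_nat z) p) zs Ps) b0
                     | zs :: nat list. length zs = length Ps}"

definition semilinear :: "nat \<Rightarrow> 'b::semiring_1 list set \<Rightarrow> bool" where
  "semilinear d C \<longleftrightarrow> (\<exists>B :: ('b list \<times> 'b list list) set. finite B \<and>
      (\<forall>(b0, Ps) \<in> B. length b0 = d \<and> (\<forall>p \<in> set Ps. length p = d)) \<and>
      C = (\<Union>(b0, Ps) \<in> B. lin_set b0 Ps))"

record ('q, 'a) pa =
  pa_states :: "'q set"
  pa_init :: 'q
  pa_trans :: "('q \<times> 'a \<times> nat list \<times> 'q) set"
  pa_final :: "'q set"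
  pa_dim :: nat
  pa_constr :: "nat list set"

definition is_pa :: "'a set \<Rightarrow> ('q, 'a) pa \<Rightarrow> bool" where
  "is_pa \<Sigma> A \<longleftrightarrow> finite (pa_states A) \<and> pa_init A \<in> pa_states A \<and>
     pa_final A \<subseteq> pa_states A \<and> finite (pa_trans A) \<and>
     pa_trans A \<subseteq> pa_states A \<times> \<Sigma> \<times> {v. length v = pa_dim A} \<times> pa_states A \<and>
     semilinear (pa_dim A) (pa_constr A)"

definition vsum :: "nat \<Rightarrow> nat list list \<Rightarrow> nat list" where
  "vsum d vs = map (\<lambda>j. \<Sum>i<length vs. vs ! i ! j) [0..<d]"

definition pa_accepts :: "('q, 'a) pa \<Rightarrow> 'a list \<Rightarrow> bool" where
  "pa_accepts A w \<longleftrightarrow> (\<exists>(p :: nat \<Rightarrow> 'q) (vs :: nat list list).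
     p 0 = pa_init A \<and> length vs = length w \<and>
     (\<forall>i < length w. (p i, w ! i, vs ! i, p (Suc i)) \<in> pa_trans A) \<and>
     p (length w) \<in> pa_final A \<and> vsum (pa_dim A) vs \<in> pa_constr A)"

definition pa_lang :: "('q, 'a) pa \<Rightarrow> 'a list set" where
  "pa_lang A = {w. pa_accepts A w}"

definition parikh_recognizable :: "'a set \<Rightarrow> 'a list set \<Rightarrow> bool" where
  "parikh_recognizable \<Sigma> U \<longleftrightarrow> (\<exists>A :: (nat, 'a) pa. is_pa \<Sigma> A \<and> pa_lang A = U)"

definition regular :: "'a set \<Rightarrow> 'a list set \<Rightarrow> bool" where
  "regular \<Sigma> V \<longleftrightarrow> (\<exists>(Q :: nat set) q0 (\<delta> :: (nat \<times> 'a \<times> nat) set) F.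
     finite Q \<and> q0 \<in> Q \<and> F \<subseteq> Q \<and> \<delta> \<subseteq> Q \<times> \<Sigma> \<times> Q \<and>
     V = {w. \<exists>p :: nat \<Rightarrow> nat. p 0 = q0 \<and>
            (\<forall>i < length w. (p i, w ! i, p (Suc i)) \<in> \<delta>) \<and> p (length w) \<in> F})"

record ('q, 'a) lpba =
  lpba_states :: "'q set"
  lpba_init :: 'q
  lpba_trans :: "('q \<times> 'a \<times> nat list \<times> 'q) set"
  lpba_final :: "'q set"
  lpba_dim :: nat
  lpba_constr :: "enat list set"

definition is_lpba :: "'a set \<Rightarrow> ('q, 'a) lpba \<Rightarrow> bool" where
  "is_lpba \<Sigma> A \<longleftrightarrow> finite (lpba_states A) \<and> lpba_init A \<in> lpba_states A \<and>
     lpba_final A \<subseteq> lpba_states A \<and> finite (lpba_trans A) \<and>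
     lpba_trans A \<subseteq> lpba_states A \<times> \<Sigma> \<times> {v. length v = lpba_dim A} \<times> lpba_states A \<and>
     semilinear (lpba_dim A) (lpba_constr A)"

definition rho :: "nat \<Rightarrow> (nat \<Rightarrow> nat list) \<Rightarrow> enat list" where
  "rho d v = map (\<lambda>j. if infinite {i. v i ! j \<noteq> 0} then \<infinity>
                       else enat (\<Sum>i \<in> {i. v i ! j \<noteq> 0}. v i ! j)) [0..<d]"

definition lpba_accepts :: "('q, 'a) lpba \<Rightarrow> 'a word \<Rightarrow> bool" where
  "lpba_accepts A \<alpha> \<longleftrightarrow> (\<exists>(p :: nat \<Rightarrow> 'q) (v :: nat \<Rightarrow> nat list).
     p 0 = lpba_init A \<and>
     (\<forall>i. (p i, \<alpha> i, v i, p (Suc i)) \<in> lpba_trans A) \<and>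
     (\<exists>\<^sub>\<infinity>i. p i \<in> lpba_final A) \<and>
     rho (lpba_dim A) v \<in> lpba_constr A)"

definition lpba_lang :: "('q, 'a) lpba \<Rightarrow> 'a word set" where
  "lpba_lang A = {\<alpha>. lpba_accepts A \<alpha>}"

definition lpba_recognizable :: "'a set \<Rightarrow> 'a word set \<Rightarrow> bool" where
  "lpba_recognizable \<Sigma> L \<longleftrightarrow> (\<exists>A :: (nat, 'a) lpba. is_lpba \<Sigma> A \<and> lpba_lang A = L)"

text \<open>V^omega = { w1 w2 ... | w_i in V, w_i nonempty }: alpha is the infinite
  concatenation of ws iff every finite concatenation ws 0 ... ws (k-1) is a prefix.\<close>
definition omega_iter :: "'a list set \<Rightarrow> 'a word set" where
  "omega_iter V = {\<alpha>. \<exists>ws :: nat \<Rightarrow> 'a list. (\<forall>i. ws i \<in> V \<and> ws i \<noteq> []) \<and>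
      (\<forall>k. prefix (\<Sum>j<k. length (ws j)) \<alpha> = concat (map ws [0..<k]))}"

definition conc_lang :: "'a list set \<Rightarrow> 'a word set \<Rightarrow> 'a word set" where
  "conc_lang U W = {u \<frown> \<beta> | u \<beta>. u \<in> U \<and> \<beta> \<in> W}"

end

theory Submission
  imports Defs "HOL-Library.Countable"
begin

(* A single language U V^omega is recognized by an LPBA that first simulates a Parikh automaton
   for U and, from one of its final states, switches to an NFA for V.  A fresh state Restart,
   which plays the role of the NFA's initial state, is entered exactly when a factor in V is
   completed, and it is the only Buchi state.  After the switch all counter vectors are zero,
   so the limit value of a run is the Parikh vector of its prefix and the constraint of the
   Parikh automaton can be reused unchanged.

   A finite union is recognized by a fresh initial state that enters one of the automata
   nondeterministically.  The automata share their counters, plus one extra counter that is set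
   to the index i on the first transition only: its limit value is i, so the constraint of the
   i-th automaton is checked exactly on runs of the i-th automaton. *)

section \<open>Semilinear sets\<close>

abbreviation lin_comb :: "nat list \<Rightarrow> 'b::semiring_1 list list \<Rightarrow> 'b list \<Rightarrow> 'b list" where
  "lin_comb zs Ps b0 \<equiv> foldr vadd (map2 (\<lambda>z p. smult (of_nat z) p) zs Ps) b0"

lemma length_smult [simp]: "length (smult c x) = length x"
  by (simp add: smult_def)

lemma length_lin_comb:
  assumes "length b0 = d" "\<forall>p\<in>set Ps. length p = d" "length zs = length Ps"
  shows "length (lin_comb zs Ps b0) = d"
  using assms
proof (induction Ps arbitrary: zs)
  case (Cons p Ps)
  then show ?case
    by (cases zs) (auto simp: vadd_def smult_def)
qed simp

lemma semilinear_length: "semilinear d C \<Longrightarrow> x \<in> C \<Longrightarrow> length x = d"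
  unfolding semilinear_def lin_set_def using length_lin_comb by fastforce

(* The hypotheses say that f is affine with linear part h. *)
lemma lin_set_image:
  fixes f h :: "'b::semiring_1 list \<Rightarrow> 'c::semiring_1 list"
  assumes "length b0 = d" "\<forall>p\<in>set Ps. length p = d"
    and add: "\<And>x y. length x = d \<Longrightarrow> length y = d \<Longrightarrow> f (vadd x y) = vadd (h x) (f y)"
    and smult: "\<And>z x. length x = d \<Longrightarrow> h (smult (of_nat z) x) = smult (of_nat z) (h x)"
  shows "f ` lin_set b0 Ps = lin_set (f b0) (map h Ps)"
proof -
  have image: "f (lin_comb zs Ps b0) = lin_comb zs (map h Ps) (f b0)" if "length zs = length Ps" for zs
    using assms(2) that
  proof (induction Ps arbitrary: zs)
    case (Cons p Ps)
    then obtain z zs' where zs: "zs = z # zs'" "length zs' = length Ps"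
      by (cases zs) auto
    have "length (lin_comb zs' Ps b0) = d"
      using Cons zs assms(1) by (intro length_lin_comb) auto
    with Cons zs show ?case
      by (simp add: add smult)
  qed simp
  have lin_set_eq: "lin_set c Rs = (\<lambda>zs. lin_comb zs Rs c) ` {zs. length zs = length Rs}"
    for c and Rs :: "'e::semiring_1 list list"
    unfolding lin_set_def by blast
  show ?thesis
    unfolding lin_set_eq image_image length_map by (rule image_cong) (simp_all add: image)
qed

lemma semilinear_image:
  fixes f h :: "'b::semiring_1 list \<Rightarrow> 'c::semiring_1 list"
  assumes "semilinear d C"
    and "\<And>x y. length x = d \<Longrightarrow> length y = d \<Longrightarrow> f (vadd x y) = vadd (h x) (f y)"
    and "\<And>z x. length x = d \<Longrightarrow> h (smult (of_nat z) x) = smult (of_nat z) (h x)"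
    and "\<And>x. length x = d \<Longrightarrow> length (f x) = d'" "\<And>x. length x = d \<Longrightarrow> length (h x) = d'"
  shows "semilinear d' (f ` C)"
proof -
  obtain B where B: "finite B" "\<forall>(b0, Ps) \<in> B. length b0 = d \<and> (\<forall>p \<in> set Ps. length p = d)"
    and C: "C = (\<Union>(b0, Ps) \<in> B. lin_set b0 Ps)"
    using assms(1) unfolding semilinear_def by blast
  have "f ` C = (\<Union>(b0, Ps) \<in> B. f ` lin_set b0 Ps)"
    unfolding C image_UN by (simp add: case_prod_unfold)
  also have "\<dots> = (\<Union>(b0, Ps) \<in> B. lin_set (f b0) (map h Ps))"
  proof (rule SUP_cong[OF refl], clarify)
    fix b0 Ps
    assume "(b0, Ps) \<in> B"
    with B(2) have "length b0 = d" "\<forall>p\<in>set Ps. length p = d"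
      by auto
    then show "f ` lin_set b0 Ps = lin_set (f b0) (map h Ps)"
      by (rule lin_set_image[where d = d, OF _ _ assms(2) assms(3)])
  qed
  also have "\<dots> = (\<Union>(b0, Ps) \<in> (\<lambda>(b0, Ps). (f b0, map h Ps)) ` B. lin_set b0 Ps)"
    by (simp add: case_prod_unfold image_image)
  finally have "f ` C = (\<Union>(b0, Ps) \<in> (\<lambda>(b0, Ps). (f b0, map h Ps)) ` B. lin_set b0 Ps)" .
  moreover have "\<forall>(b0, Ps) \<in> (\<lambda>(b0, Ps). (f b0, map h Ps)) ` B.
      length b0 = d' \<and> (\<forall>p \<in> set Ps. length p = d')"
    using B(2) assms(4,5) by fastforce
  ultimately show ?thesis
    unfolding semilinear_def using B(1) by blast
qed

lemma semilinear_UN: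
  assumes "finite I" and "\<And>i. i \<in> I \<Longrightarrow> semilinear d (C i)"
  shows "semilinear d (\<Union>i\<in>I. C i)"
proof -
  have "\<forall>i\<in>I. \<exists>B. finite B \<and> (\<forall>(b0, Ps) \<in> B. length b0 = d \<and> (\<forall>p \<in> set Ps. length p = d)) \<and>
      C i = (\<Union>(b0, Ps) \<in> B. lin_set b0 Ps)"
    using assms(2) unfolding semilinear_def by blast
  then obtain B where "\<forall>i\<in>I. finite (B i) \<and>
      (\<forall>(b0, Ps) \<in> B i. length b0 = d \<and> (\<forall>p \<in> set Ps. length p = d)) \<and>
      C i = (\<Union>(b0, Ps) \<in> B i. lin_set b0 Ps)"
    by (rule bchoice[THEN exE])
  with assms(1) show ?thesis
    unfolding semilinear_def by (intro exI[of _ "\<Union>i\<in>I. B i"]) auto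
qed

definition limit_sum :: "(nat \<Rightarrow> nat) \<Rightarrow> enat" where
  "limit_sum f = (if infinite {t. f t \<noteq> 0} then \<infinity> else enat (\<Sum>t \<in> {t. f t \<noteq> 0}. f t))"

lemma length_rho [simp]: "length (rho d v) = d"
  by (simp add: rho_def)

lemma rho_nth: "j < d \<Longrightarrow> rho d v ! j = limit_sum (\<lambda>t. v t ! j)"
  by (simp add: rho_def limit_sum_def)

lemma limit_sum_finite_support:
  assumes "\<And>t. K \<le> t \<Longrightarrow> f t = 0"
  shows "limit_sum f = enat (\<Sum>t<K. f t)"
proof -
  have support: "{t. f t \<noteq> 0} \<subseteq> {..<K}"
    using assms not_less by blast
  then have "(\<Sum>t \<in> {t. f t \<noteq> 0}. f t) = (\<Sum>t<K. f t)"
    by (intro sum.mono_neutral_left) auto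
  with support show ?thesis
    by (simp add: limit_sum_def finite_subset)
qed

lemma rho_finite_support:
  assumes "\<And>t j. K \<le> t \<Longrightarrow> j < d \<Longrightarrow> v t ! j = 0"
  shows "rho d v = map enat (vsum d (map v [0..<K]))"
  by (rule nth_equalityI) (simp_all add: rho_nth assms limit_sum_finite_support vsum_def)

definition pad :: "nat \<Rightarrow> 'b::zero list \<Rightarrow> 'b list" where
  "pad M x = x @ replicate (M - length x) 0"

lemma length_pad: "length x \<le> M \<Longrightarrow> length (pad M x) = M"
  by (simp add: pad_def)

lemma nth_pad: "j < M \<Longrightarrow> pad M x ! j = (if j < length x then x ! j else 0)"
  by (simp add: pad_def nth_append)

lemma pad_inject: "length x = length y \<Longrightarrow> pad M x = pad M y \<Longrightarrow> x = y"
  by (simp add: pad_def)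

lemma rho_marked:
  assumes "\<And>t. length (v t) = d" and "d \<le> M"
  shows "rho (Suc M) (\<lambda>t. (if t = 0 then i else 0) # pad M (v t)) = enat i # pad M (rho d v)"
proof (rule nth_equalityI)
  fix j
  assume "j < length (rho (Suc M) (\<lambda>t. (if t = 0 then i else 0) # pad M (v t)))"
  then have j: "j < Suc M" by simp
  show "rho (Suc M) (\<lambda>t. (if t = 0 then i else 0) # pad M (v t)) ! j = (enat i # pad M (rho d v)) ! j"
  proof (cases j)
    case 0
    then show ?thesis
      by (simp add: rho_nth limit_sum_finite_support[where K = 1])
  next
    case (Suc j')
    then show ?thesis
      using j assms by (simp add: rho_nth nth_pad limit_sum_finite_support[where K = 0] zero_enat_def)
  qed
qed (simp add: length_pad assms)

lemma prefix_append_subsequence: "i \<le> j \<Longrightarrow> prefix j w = prefix i w @ (w [i \<rightarrow> j])"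
  using subsequence_append[where i = i and j = "j - i"] by simp

lemma omega_iter_iff_idx_sequence:
  "\<beta> \<in> omega_iter V \<longleftrightarrow> (\<exists>idx. idx_sequence idx \<and> (\<forall>k. \<beta> [idx k \<rightarrow> idx (Suc k)] \<in> V))"
proof
  assume "\<beta> \<in> omega_iter V"
  then obtain ws where ws: "\<And>k. ws k \<in> V" "\<And>k. ws k \<noteq> []"
    and prefixes: "\<And>k. prefix (\<Sum>j<k. length (ws j)) \<beta> = concat (map ws [0..<k])"
    unfolding omega_iter_def by blast
  define idx where "idx k = (\<Sum>j<k. length (ws j))" for k
  have "idx_sequence idx"
    using ws(2) by (simp add: idx_sequence_def idx_def)
  moreover have "\<beta> [idx k \<rightarrow> idx (Suc k)] = ws k" for k
  proof -
    have "prefix (idx k) \<beta> @ \<beta> [idx k \<rightarrow> idx (Suc k)] = prefix (idx (Suc k)) \<beta>"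
      by (simp add: subsequence_append idx_def)
    also have "\<dots> = concat (map ws [0..<k]) @ ws k"
      using prefixes[of "Suc k"] by (simp add: idx_def)
    also have "\<dots> = prefix (idx k) \<beta> @ ws k"
      using prefixes[of k] by (simp add: idx_def)
    finally show ?thesis
      by simp
  qed
  ultimately show "\<exists>idx. idx_sequence idx \<and> (\<forall>k. \<beta> [idx k \<rightarrow> idx (Suc k)] \<in> V)"
    using ws(1) by metis
next
  assume "\<exists>idx. idx_sequence idx \<and> (\<forall>k. \<beta> [idx k \<rightarrow> idx (Suc k)] \<in> V)"
  then obtain idx where idx: "idx_sequence idx" "\<And>k. \<beta> [idx k \<rightarrow> idx (Suc k)] \<in> V"
    by blast
  have step: "idx k < idx (Suc k)" for k
    using idx(1) by (simp add: idx_sequence_def)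
  define ws where "ws k = \<beta> [idx k \<rightarrow> idx (Suc k)]" for k
  have "(\<Sum>j<k. length (ws j)) = idx k" for k
    using idx(1) step by (induction k) (simp_all add: ws_def idx_sequence_def less_imp_le)
  moreover have "concat (map ws [0..<k]) = prefix (idx k) \<beta>" for k
  proof (induction k)
    case (Suc k)
    have "prefix (idx (Suc k)) \<beta> = prefix (idx k) \<beta> @ (\<beta> [idx k \<rightarrow> idx (Suc k)])"
      using step[of k] by (intro prefix_append_subsequence) simp
    with Suc show ?case
      by (simp add: ws_def)
  qed (use idx(1) in \<open>simp add: idx_sequence_def\<close>)
  moreover have "ws k \<in> V \<and> ws k \<noteq> []" for k
    using idx(2) step[of k] by (simp add: ws_def)
  ultimately show "\<beta> \<in> omega_iter V"
    unfolding omega_iter_def by (intro CollectI exI[of _ ws]) simp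
qed

lemma idx_sequence_ge: "idx_sequence idx \<Longrightarrow> k \<le> idx k"
  by (induction k) (auto simp: idx_sequence_def Suc_le_eq intro: le_less_trans)

lemma INFM_shift: "(\<exists>\<^sub>\<infinity>t. P (k + t)) \<longleftrightarrow> (\<exists>\<^sub>\<infinity>t::nat. P t)"
  using eventually_sequentially_seg[of "\<lambda>t. \<not> P t" k]
  by (simp add: frequently_def cofinite_eq_sequentially add.commute)

lemma INFM_idx_sequence:
  assumes "\<exists>\<^sub>\<infinity>t. P t"
  obtains idx where "idx_sequence idx" and "\<And>k. P (idx (Suc k))"
    and "\<And>k t. idx k < t \<Longrightarrow> t < idx (Suc k) \<Longrightarrow> \<not> P t"
proof -
  define next_hit where "next_hit m = (LEAST t. m < t \<and> P t)" for m
  have hit: "m < next_hit m \<and> P (next_hit m)" for m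
    unfolding next_hit_def by (rule LeastI_ex) (use assms in \<open>auto simp: INFM_nat\<close>)
  have no_hit: "\<not> P t" if "m < t" "t < next_hit m" for m t
    using not_less_Least[of t "\<lambda>t. m < t \<and> P t"] that unfolding next_hit_def by blast
  define idx where "idx k = (next_hit ^^ k) 0" for k
  show ?thesis
  proof (rule that)
    show "idx_sequence idx"
      using hit by (simp add: idx_sequence_def idx_def)
    show "P (idx (Suc k))" for k
      using hit by (simp add: idx_def)
    show "\<not> P t" if "idx k < t" "t < idx (Suc k)" for k t
      using no_hit[of "idx k" t] that by (simp add: idx_def)
  qed
qed

lemma preimage_run:
  assumes "inj f"
    and "\<And>t. (P t, \<alpha> t, V t, P (Suc t)) \<in> (\<lambda>(p, a, v, q). (f p, a, h v, f q)) ` T"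
  obtains p v where "P = f \<circ> p" "V = h \<circ> v" "\<And>t. (p t, \<alpha> t, v t, p (Suc t)) \<in> T"
proof -
  have "\<forall>t. \<exists>tr. tr \<in> T \<and> (P t, \<alpha> t, V t, P (Suc t)) = (\<lambda>(p, a, v, q). (f p, a, h v, f q)) tr"
    using assms(2) by blast
  then have "\<exists>tr. \<forall>t. tr t \<in> T \<and> (P t, \<alpha> t, V t, P (Suc t)) = (\<lambda>(p, a, v, q). (f p, a, h v, f q)) (tr t)"
    by (rule choice)
  then obtain tr where tr: "\<And>t. tr t \<in> T"
    and tr_eq: "\<And>t. (P t, \<alpha> t, V t, P (Suc t)) = (\<lambda>(p, a, v, q). (f p, a, h v, f q)) (tr t)"
    by blast
  define p where "p t = fst (tr t)" for t
  define v where "v t = fst (snd (snd (tr t)))" for t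
  have P: "P t = f (p t)" and V: "V t = h (v t)" for t
    using tr_eq[of t] by (simp_all add: p_def v_def case_prod_beta)
  have "f (snd (snd (snd (tr t)))) = f (p (Suc t))" for t
    using tr_eq[of t] P[of "Suc t"] by (simp add: case_prod_beta)
  then have "tr t = (p t, \<alpha> t, v t, p (Suc t))" for t
    using tr_eq[of t] injD[OF assms(1)] by (simp add: p_def v_def case_prod_beta prod_eq_iff)
  with tr have "(p t, \<alpha> t, v t, p (Suc t)) \<in> T" for t
    by metis
  then show ?thesis
    by (rule that[of p v, rotated 2]) (simp_all add: fun_eq_iff P V)
qed

lemma lpba_recognizable_lpba_lang:
  fixes B :: "('q::countable, 'a) lpba"
  assumes "is_lpba \<Sigma> B"
  shows "lpba_recognizable \<Sigma> (lpba_lang B)"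
proof -
  let ?f = "to_nat :: 'q \<Rightarrow> nat"
  define B' :: "(nat, 'a) lpba" where "B' = \<lparr>lpba_states = ?f ` lpba_states B,
     lpba_init = ?f (lpba_init B),
     lpba_trans = (\<lambda>(p, a, v, q). (?f p, a, id v, ?f q)) ` lpba_trans B,
     lpba_final = ?f ` lpba_final B, lpba_dim = lpba_dim B, lpba_constr = lpba_constr B\<rparr>"
  have "is_lpba \<Sigma> B'"
    using assms unfolding is_lpba_def B'_def by (auto simp: image_subset_iff)
  moreover have "lpba_accepts B' \<alpha> \<longleftrightarrow> lpba_accepts B \<alpha>" for \<alpha>
  proof
    assume "lpba_accepts B' \<alpha>"
    then obtain P v where P: "P 0 = ?f (lpba_init B)"
      "\<And>t. (P t, \<alpha> t, v t, P (Suc t)) \<in> (\<lambda>(p, a, v, q). (?f p, a, id v, ?f q)) ` lpba_trans B"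
      "\<exists>\<^sub>\<infinity>t. P t \<in> ?f ` lpba_final B" "rho (lpba_dim B) v \<in> lpba_constr B"
      unfolding lpba_accepts_def B'_def by auto
    obtain p w where "P = ?f \<circ> p" "v = id \<circ> w" "\<And>t. (p t, \<alpha> t, w t, p (Suc t)) \<in> lpba_trans B"
      using preimage_run[of ?f P \<alpha> v id, OF inj_to_nat P(2)] by blast
    with P show "lpba_accepts B \<alpha>"
      unfolding lpba_accepts_def by (auto simp: inj_image_mem_iff[OF inj_to_nat] intro!: exI[of _ p])
  next
    assume "lpba_accepts B \<alpha>"
    then obtain p v where "p 0 = lpba_init B" "\<And>t. (p t, \<alpha> t, v t, p (Suc t)) \<in> lpba_trans B"
      "\<exists>\<^sub>\<infinity>t. p t \<in> lpba_final B" "rho (lpba_dim B) v \<in> lpba_constr B"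
      unfolding lpba_accepts_def by blast
    then show "lpba_accepts B' \<alpha>"
      unfolding lpba_accepts_def B'_def
      by (auto simp: inj_image_mem_iff[OF inj_to_nat] intro!: exI[of _ "?f \<circ> p"] exI[of _ v]
          image_eqI[where x = "(p t, \<alpha> t, v t, p (Suc t))" for t])
  qed
  ultimately show ?thesis
    unfolding lpba_recognizable_def lpba_lang_def by blast
qed

section \<open>Finite unions\<close>

locale lpba_family =
  fixes \<Sigma> :: "'a set" and I :: "nat set" and A :: "nat \<Rightarrow> (nat, 'a) lpba"
  assumes finite_index: "finite I" and is_lpba_member: "\<And>i. i \<in> I \<Longrightarrow> is_lpba \<Sigma> (A i)"
begin

definition width :: nat where
  "width = (\<Sum>i\<in>I. lpba_dim (A i))"

lemma dim_le_width: "i \<in> I \<Longrightarrow> lpba_dim (A i) \<le> width"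
  unfolding width_def using finite_index by (intro member_le_sum) auto

lemma lpba_trans_memberD:
  assumes "i \<in> I" "(p, a, v, q) \<in> lpba_trans (A i)"
  shows "p \<in> lpba_states (A i)" "a \<in> \<Sigma>" "length v = lpba_dim (A i)" "q \<in> lpba_states (A i)"
  using assms is_lpba_member[of i] unfolding is_lpba_def by auto

definition lift_trans :: "nat \<Rightarrow> ((nat \<times> nat) option \<times> 'a \<times> nat list \<times> (nat \<times> nat) option) set" where
  "lift_trans i = (\<lambda>(p, a, v, q). (Some (i, p), a, 0 # pad width v, Some (i, q))) ` lpba_trans (A i)"

definition start_trans :: "nat \<Rightarrow> ((nat \<times> nat) option \<times> 'a \<times> nat list \<times> (nat \<times> nat) option) set" where
  "start_trans i = (\<lambda>(p, a, v, q). (None, a, i # pad width v, Some (i, q))) `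
     {tr \<in> lpba_trans (A i). fst tr = lpba_init (A i)}"

definition union_lpba :: "((nat \<times> nat) option, 'a) lpba" where
  "union_lpba = \<lparr>lpba_states = insert None (\<Union>i\<in>I. Some ` Pair i ` lpba_states (A i)),
     lpba_init = None,
     lpba_trans = (\<Union>i\<in>I. lift_trans i \<union> start_trans i),
     lpba_final = (\<Union>i\<in>I. Some ` Pair i ` lpba_final (A i)),
     lpba_dim = Suc width,
     lpba_constr = (\<Union>i\<in>I. (\<lambda>c. enat i # pad width c) ` lpba_constr (A i))\<rparr>"

lemma is_lpba_union_lpba: "is_lpba \<Sigma> union_lpba"
proof -
  have "finite (lift_trans i \<union> start_trans i)" if "i \<in> I" for i
    using is_lpba_member[OF that] unfolding is_lpba_def lift_trans_def start_trans_def by simp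
  moreover have "lift_trans i \<union> start_trans i \<subseteq> lpba_states union_lpba \<times> \<Sigma> \<times>
      {v. length v = Suc width} \<times> lpba_states union_lpba" if "i \<in> I" for i
    using that lpba_trans_memberD[OF that] dim_le_width[OF that]
    by (fastforce simp: lift_trans_def start_trans_def union_lpba_def length_pad)
  moreover have "semilinear (Suc width) ((\<lambda>c. enat i # pad width c) ` lpba_constr (A i))"
    if "i \<in> I" for i
  proof (rule semilinear_image[where h = "\<lambda>c. 0 # pad width c"])
    show "semilinear (lpba_dim (A i)) (lpba_constr (A i))"
      using is_lpba_member[OF that] by (simp add: is_lpba_def)
  qed (use dim_le_width[OF that] in
      \<open>simp_all add: length_pad pad_def vadd_def smult_def zip_append\<close>)
  moreover have "lpba_final union_lpba \<subseteq> lpba_states union_lpba"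
    using is_lpba_member by (fastforce simp: union_lpba_def is_lpba_def)
  ultimately show ?thesis
    using finite_index is_lpba_member unfolding is_lpba_def
    by (auto simp: union_lpba_def intro!: semilinear_UN)
qed

lemma union_lpba_acceptsI:
  assumes i: "i \<in> I" and "lpba_accepts (A i) \<alpha>"
  shows "lpba_accepts union_lpba \<alpha>"
proof -
  obtain p v where p0: "p 0 = lpba_init (A i)" and run: "\<And>t. (p t, \<alpha> t, v t, p (Suc t)) \<in> lpba_trans (A i)"
    and inf: "\<exists>\<^sub>\<infinity>t. p t \<in> lpba_final (A i)" and acc: "rho (lpba_dim (A i)) v \<in> lpba_constr (A i)"
    using assms(2) unfolding lpba_accepts_def by blast
  define P where "P t = (if t = 0 then None else Some (i, p t))" for t
  define V where "V t = (if t = 0 then i else 0) # pad width (v t)" for t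
  have "(P t, \<alpha> t, V t, P (Suc t)) \<in> lift_trans i \<union> start_trans i" for t
    using run[of t] p0 by (force simp: P_def V_def lift_trans_def start_trans_def)
  then have "(P t, \<alpha> t, V t, P (Suc t)) \<in> lpba_trans union_lpba" for t
    using i by (auto simp: union_lpba_def)
  moreover have "\<exists>\<^sub>\<infinity>t. P t \<in> lpba_final union_lpba"
  proof -
    have "\<exists>\<^sub>\<infinity>t. p t \<in> lpba_final (A i) \<and> t \<noteq> 0"
      using inf by (rule INFM_conjI) (rule MOST_neq)
    then show ?thesis
      by (rule INFM_mono) (use i in \<open>auto simp: P_def union_lpba_def\<close>)
  qed
  moreover have "rho (Suc width) V = enat i # pad width (rho (lpba_dim (A i)) v)"
    unfolding V_def using lpba_trans_memberD(3)[OF i run] dim_le_width[OF i] by (rule rho_marked)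
  moreover have "rho (Suc width) V \<in> lpba_constr union_lpba"
    using i acc by (auto simp: union_lpba_def \<open>rho (Suc width) V = _\<close>)
  ultimately show ?thesis
    unfolding lpba_accepts_def by (intro exI[of _ P] exI[of _ V]) (simp add: union_lpba_def P_def)
qed

lemma union_lpba_run:
  assumes P0: "P 0 = None" and run: "\<And>t. (P t, \<alpha> t, V t, P (Suc t)) \<in> lpba_trans union_lpba"
  obtains i p v where "i \<in> I" "p 0 = lpba_init (A i)" "\<And>t. (p t, \<alpha> t, v t, p (Suc t)) \<in> lpba_trans (A i)"
    "\<And>t. 0 < t \<Longrightarrow> P t = Some (i, p t)" "V = (\<lambda>t. (if t = 0 then i else 0) # pad width (v t))"
proof -
  have run': "(P t, \<alpha> t, V t, P (Suc t)) \<in> (\<Union>i\<in>I. lift_trans i \<union> start_trans i)" for t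
    using run[of t] by (simp add: union_lpba_def)
  obtain i q v0 where i: "i \<in> I" and first: "(lpba_init (A i), \<alpha> 0, v0, q) \<in> lpba_trans (A i)"
    and V0: "V 0 = i # pad width v0" and P1: "P (Suc 0) = Some (i, q)"
    using run'[of 0] P0 by (auto simp: lift_trans_def start_trans_def)
  have from_Some: "(Some (i, q), a, w, Y) \<in> lift_trans i"
    if "(Some (i, q), a, w, Y) \<in> (\<Union>j\<in>I. lift_trans j \<union> start_trans j)" for q a w Y
    using that by (auto simp: lift_trans_def start_trans_def intro: rev_image_eqI)
  have later: "(P (Suc t), \<alpha> (Suc t), V (Suc t), P (Suc (Suc t))) \<in> lift_trans i" for t
  proof (induction t)
    case 0
    then show ?case
      using from_Some run'[of "Suc 0"] P1 by simp
  next
    case (Suc t)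
    then obtain q where "P (Suc (Suc t)) = Some (i, q)"
      by (auto simp: lift_trans_def)
    then show ?case
      using from_Some run'[of "Suc (Suc t)"] by simp
  qed
  obtain p v where P: "(\<lambda>t. P (Suc t)) = (\<lambda>q. Some (i, q)) \<circ> p"
    and V: "(\<lambda>t. V (Suc t)) = (\<lambda>v. 0 # pad width v) \<circ> v"
    and run_i: "\<And>t. (p t, \<alpha> (Suc t), v t, p (Suc t)) \<in> lpba_trans (A i)"
    using preimage_run[of "\<lambda>q. Some (i, q)" "\<lambda>t. P (Suc t)" "\<lambda>t. \<alpha> (Suc t)"
        "\<lambda>t. V (Suc t)" "\<lambda>v. 0 # pad width v" "lpba_trans (A i)"] later
    unfolding lift_trans_def by (auto simp: inj_def)
  show ?thesis
  proof (rule that[OF i, of "case_nat (lpba_init (A i)) p" "case_nat v0 v"])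
    have "q = p 0"
      using P1 P by (simp add: fun_eq_iff)
    then show "(case_nat (lpba_init (A i)) p t, \<alpha> t, case_nat v0 v t, case_nat (lpba_init (A i)) p (Suc t))
        \<in> lpba_trans (A i)" for t
      using first run_i by (cases t) simp_all
    show "P t = Some (i, case_nat (lpba_init (A i)) p t)" if "0 < t" for t
      using P that by (cases t) (simp_all add: fun_eq_iff)
    show "V = (\<lambda>t. (if t = 0 then i else 0) # pad width (case_nat v0 v t))"
      using V V0 by (auto simp: fun_eq_iff split: nat.split)
  qed simp
qed

lemma union_lpba_acceptsD:
  assumes "lpba_accepts union_lpba \<alpha>"
  shows "\<exists>i\<in>I. lpba_accepts (A i) \<alpha>"
proof -
  obtain P V where P0: "P 0 = None"
    and run: "\<And>t. (P t, \<alpha> t, V t, P (Suc t)) \<in> lpba_trans union_lpba"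
    and final: "\<exists>\<^sub>\<infinity>t. P t \<in> (\<Union>i\<in>I. Some ` Pair i ` lpba_final (A i))"
    and acc: "rho (Suc width) V \<in> (\<Union>i\<in>I. (\<lambda>c. enat i # pad width c) ` lpba_constr (A i))"
    using assms unfolding lpba_accepts_def by (auto simp: union_lpba_def)
  obtain i p v where i: "i \<in> I" and p0: "p 0 = lpba_init (A i)"
    and run_i: "\<And>t. (p t, \<alpha> t, v t, p (Suc t)) \<in> lpba_trans (A i)"
    and P: "\<And>t. 0 < t \<Longrightarrow> P t = Some (i, p t)"
    and V: "V = (\<lambda>t. (if t = 0 then i else 0) # pad width (v t))"
    using union_lpba_run[OF P0 run] by blast
  have "rho (Suc width) V = enat i # pad width (rho (lpba_dim (A i)) v)"
    unfolding V using lpba_trans_memberD(3)[OF i run_i] dim_le_width[OF i] by (rule rho_marked)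
  with acc obtain j c where j: "j \<in> I" "c \<in> lpba_constr (A j)"
    and eq: "enat i # pad width (rho (lpba_dim (A i)) v) = enat j # pad width c"
    by auto
  moreover have "length c = lpba_dim (A j)"
    using j is_lpba_member[of j] semilinear_length unfolding is_lpba_def by blast
  ultimately have "rho (lpba_dim (A i)) v \<in> lpba_constr (A i)"
    using pad_inject[of "rho (lpba_dim (A i)) v" c] by auto
  moreover have "\<exists>\<^sub>\<infinity>t. p t \<in> lpba_final (A i)"
    using final
  proof (rule INFM_mono)
    fix t
    assume t: "P t \<in> (\<Union>j\<in>I. Some ` Pair j ` lpba_final (A j))"
    with P0 have "0 < t"
      by (cases t) auto
    with t P[of t] show "p t \<in> lpba_final (A i)"
      by auto
  qed
  ultimately show ?thesis
    using i p0 run_i unfolding lpba_accepts_def by blast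
qed

lemma lpba_lang_union_lpba: "lpba_lang union_lpba = (\<Union>i\<in>I. lpba_lang (A i))"
  unfolding lpba_lang_def using union_lpba_acceptsI union_lpba_acceptsD by blast

end

lemma lpba_recognizable_UN:
  fixes \<Sigma> :: "'a set" and L :: "nat \<Rightarrow> 'a word set"
  assumes "finite I" and "\<And>i. i \<in> I \<Longrightarrow> lpba_recognizable \<Sigma> (L i)"
  shows "lpba_recognizable \<Sigma> (\<Union>i\<in>I. L i)"
proof -
  have "\<forall>i\<in>I. \<exists>A :: (nat, 'a) lpba. is_lpba \<Sigma> A \<and> lpba_lang A = L i"
    using assms(2) unfolding lpba_recognizable_def by blast
  from bchoice[OF this] obtain A :: "nat \<Rightarrow> (nat, 'a) lpba"
    where A: "\<forall>i\<in>I. is_lpba \<Sigma> (A i) \<and> lpba_lang (A i) = L i"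
    by blast
  interpret lpba_family \<Sigma> I A
    using assms(1) A by unfold_locales auto
  show ?thesis
    using lpba_recognizable_lpba_lang[OF is_lpba_union_lpba] A by (simp add: lpba_lang_union_lpba)
qed

section \<open>Concatenation with an omega-iteration\<close>

definition nfa_lang :: "nat \<Rightarrow> (nat \<times> 'a \<times> nat) set \<Rightarrow> nat set \<Rightarrow> 'a list set" where
  "nfa_lang q0 \<delta> F = {w. \<exists>p :: nat \<Rightarrow> nat. p 0 = q0 \<and>
     (\<forall>i < length w. (p i, w ! i, p (Suc i)) \<in> \<delta>) \<and> p (length w) \<in> F}"

lemma omega_iter_nfa_runs:
  assumes "\<beta> \<in> omega_iter (nfa_lang q0 \<delta> F)"
  obtains idx r where "idx_sequence idx" "\<And>k. r k 0 = q0"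
    "\<And>k c. c < idx (Suc k) - idx k \<Longrightarrow> (r k c, \<beta> (idx k + c), r k (Suc c)) \<in> \<delta>"
    "\<And>k. r k (idx (Suc k) - idx k) \<in> F"
proof -
  obtain idx where idx: "idx_sequence idx" and blocks: "\<And>k. \<beta> [idx k \<rightarrow> idx (Suc k)] \<in> nfa_lang q0 \<delta> F"
    using assms omega_iter_iff_idx_sequence by blast
  have "\<exists>r. r 0 = q0 \<and> (\<forall>c < idx (Suc k) - idx k. (r c, \<beta> (idx k + c), r (Suc c)) \<in> \<delta>)
      \<and> r (idx (Suc k) - idx k) \<in> F" for k
  proof -
    let ?w = "\<beta> [idx k \<rightarrow> idx (Suc k)]"
    obtain r where "r 0 = q0" "\<forall>c < length ?w. (r c, ?w ! c, r (Suc c)) \<in> \<delta>" "r (length ?w) \<in> F"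
      using blocks[of k] unfolding nfa_lang_def by blast
    then show ?thesis
      by (intro exI[of _ r]) simp
  qed
  then have "\<exists>r. \<forall>k. r k 0 = q0 \<and> (\<forall>c < idx (Suc k) - idx k. (r k c, \<beta> (idx k + c), r k (Suc c)) \<in> \<delta>)
      \<and> r k (idx (Suc k) - idx k) \<in> F"
    by (rule choice[OF allI])
  with idx that show ?thesis
    by blast
qed

datatype conc_state = Pa_state nat | Nfa_state nat | Restart

instance conc_state :: countable
  by countable_datatype

locale pa_nfa =
  fixes \<Sigma> :: "'a set" and A :: "(nat, 'a) pa"
    and Q :: "nat set" and q0 :: nat and \<delta> :: "(nat \<times> 'a \<times> nat) set" and F :: "nat set"
  assumes finite_alphabet: "finite \<Sigma>" and is_pa: "is_pa \<Sigma> A"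
    and nfa: "finite Q" "q0 \<in> Q" "F \<subseteq> Q" "\<delta> \<subseteq> Q \<times> \<Sigma> \<times> Q"
begin

(* Restart, and the final PA state at which the NFA phase starts, act as the initial state q0. *)
fun nfa_state :: "conc_state \<Rightarrow> nat" where
  "nfa_state (Nfa_state q) = q"
| "nfa_state _ = q0"

definition v_step :: "conc_state \<Rightarrow> 'a \<Rightarrow> conc_state \<Rightarrow> bool" where
  "v_step X a Y \<longleftrightarrow> (\<forall>p. X = Pa_state p \<longrightarrow> p \<in> pa_final A) \<and>
     ((\<exists>q. Y = Nfa_state q \<and> (nfa_state X, a, q) \<in> \<delta>) \<or>
      (Y = Restart \<and> (\<exists>q\<in>F. (nfa_state X, a, q) \<in> \<delta>)))"

definition u_trans :: "(conc_state \<times> 'a \<times> nat list \<times> conc_state) set" where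
  "u_trans = (\<lambda>(p, a, v, q). (Pa_state p, a, v, Pa_state q)) ` pa_trans A"

definition v_trans :: "(conc_state \<times> 'a \<times> nat list \<times> conc_state) set" where
  "v_trans = {(X, a, replicate (pa_dim A) 0, Y) | X a Y. v_step X a Y}"

definition conc_lpba :: "(conc_state, 'a) lpba" where
  "conc_lpba = \<lparr>lpba_states = Pa_state ` pa_states A \<union> Nfa_state ` Q \<union> {Restart},
     lpba_init = Pa_state (pa_init A),
     lpba_trans = u_trans \<union> v_trans,
     lpba_final = {Restart},
     lpba_dim = pa_dim A,
     lpba_constr = map enat ` pa_constr A\<rparr>"

lemma conc_trans_cases:
  assumes "(X, a, w, Y) \<in> u_trans \<union> v_trans"
  shows "Y \<in> range Pa_state \<Longrightarrow> \<exists>p q. X = Pa_state p \<and> Y = Pa_state q \<and> (p, a, w, q) \<in> pa_trans A"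
    and "Y \<notin> range Pa_state \<Longrightarrow> w = replicate (pa_dim A) 0 \<and> v_step X a Y"
  using assms by (auto simp: u_trans_def v_trans_def v_step_def)

lemma is_lpba_conc_lpba: "is_lpba \<Sigma> conc_lpba"
proof -
  let ?S = "lpba_states conc_lpba"
  have "X \<in> ?S \<and> a \<in> \<Sigma> \<and> Y \<in> ?S" if step: "v_step X a Y" for X a Y
  proof -
    obtain q where q: "(nfa_state X, a, q) \<in> \<delta>" "Y = Nfa_state q \<or> Y = Restart"
      using step unfolding v_step_def by blast
    then have "nfa_state X \<in> Q" "a \<in> \<Sigma>" "q \<in> Q"
      using nfa(4) by auto
    moreover have "p \<in> pa_states A" if "X = Pa_state p" for p
      using step is_pa that unfolding v_step_def is_pa_def by auto
    ultimately show ?thesis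
      using q(2) by (cases X) (auto simp: conc_lpba_def)
  qed
  then have v_sub: "v_trans \<subseteq> ?S \<times> \<Sigma> \<times> {replicate (pa_dim A) 0} \<times> ?S"
    unfolding v_trans_def by blast
  have u_sub: "u_trans \<subseteq> ?S \<times> \<Sigma> \<times> {v. length v = pa_dim A} \<times> ?S"
    using is_pa unfolding is_pa_def u_trans_def conc_lpba_def by auto
  have finite_S: "finite ?S"
    using is_pa nfa(1) by (simp add: conc_lpba_def is_pa_def)
  have "finite v_trans"
    using finite_S finite_alphabet by (blast intro: finite_subset[OF v_sub])
  moreover have "finite u_trans"
    using is_pa by (simp add: u_trans_def is_pa_def)
  moreover have "semilinear (pa_dim A) (map enat ` pa_constr A)"
    using is_pa unfolding is_pa_def
    by (intro semilinear_image[where h = "map enat"])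
      (simp_all add: vadd_def smult_def zip_map1 zip_map2 split_def of_nat_eq_enat)
  ultimately show ?thesis
    using is_pa finite_S u_sub v_sub unfolding is_lpba_def is_pa_def
    by (auto simp: conc_lpba_def)
qed

lemma subsequence_in_nfa_lang:
  assumes "a < b" and start: "nfa_state (R a) = q0"
    and steps: "\<And>t. a \<le> t \<Longrightarrow> t < b \<Longrightarrow> v_step (R t) (\<alpha> t) (R (Suc t))"
    and inner: "\<And>t. a < t \<Longrightarrow> t < b \<Longrightarrow> R t \<noteq> Restart" and last: "R b = Restart"
  shows "\<alpha> [a \<rightarrow> b] \<in> nfa_lang q0 \<delta> F"
proof -
  have "v_step (R (b - 1)) (\<alpha> (b - 1)) (R b)"
    using steps[of "b - 1"] assms(1) by (simp add: Suc_diff_Suc)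
  then obtain qf where qf: "qf \<in> F" "(nfa_state (R (b - 1)), \<alpha> (b - 1), qf) \<in> \<delta>"
    using last by (auto simp: v_step_def)
  define r where "r c = (if a + c < b then nfa_state (R (a + c)) else qf)" for c
  have "(r c, \<alpha> (a + c), r (Suc c)) \<in> \<delta>" if "c < b - a" for c
  proof (cases "a + Suc c < b")
    case True
    then have "R (a + Suc c) \<noteq> Restart"
      using inner by simp
    with True steps[of "a + c"] obtain q where
      "R (a + Suc c) = Nfa_state q" "(nfa_state (R (a + c)), \<alpha> (a + c), q) \<in> \<delta>"
      by (auto simp: v_step_def)
    with True that show ?thesis
      by (simp add: r_def)
  next
    case False
    with that have "a + c = b - 1"
      by simp
    with qf that False show ?thesis
      by (simp add: r_def)
  qed
  moreover have "r 0 = q0" and "r (b - a) \<in> F"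
    using assms(1) start qf(1) by (simp_all add: r_def)
  ultimately show ?thesis
    unfolding nfa_lang_def by (intro CollectI exI[of _ r]) simp
qed

lemma omega_iter_of_v_run:
  assumes steps: "\<And>t. v_step (R t) (\<beta> t) (R (Suc t))" and start: "nfa_state (R 0) = q0"
    and restarts: "\<exists>\<^sub>\<infinity>t. R t = Restart"
  shows "\<beta> \<in> omega_iter (nfa_lang q0 \<delta> F)"
proof -
  obtain idx where idx: "idx_sequence idx" and hits: "\<And>k. R (idx (Suc k)) = Restart"
    and between: "\<And>k t. idx k < t \<Longrightarrow> t < idx (Suc k) \<Longrightarrow> R t \<noteq> Restart"
    using restarts by (rule INFM_idx_sequence) blast
  have "\<beta> [idx k \<rightarrow> idx (Suc k)] \<in> nfa_lang q0 \<delta> F" for k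
  proof (rule subsequence_in_nfa_lang)
    show "idx k < idx (Suc k)"
      using idx by (simp add: idx_sequence_def)
    show "nfa_state (R (idx k)) = q0"
      using start hits idx by (cases k) (simp_all add: idx_sequence_def)
  qed (use steps hits between in auto)
  with idx show ?thesis
    using omega_iter_iff_idx_sequence by blast
qed

lemma v_run_of_omega_iter:
  assumes "\<beta> \<in> omega_iter (nfa_lang q0 \<delta> F)"
    and start: "nfa_state X = q0" "\<And>p. X = Pa_state p \<Longrightarrow> p \<in> pa_final A"
  obtains P where "P 0 = X" "\<And>t. v_step (P t) (\<beta> t) (P (Suc t))" "\<exists>\<^sub>\<infinity>t. P t = Restart"
proof -
  obtain idx r where idx: "idx_sequence idx" and r0: "\<And>k. r k 0 = q0"
    and r_step: "\<And>k c. c < idx (Suc k) - idx k \<Longrightarrow> (r k c, \<beta> (idx k + c), r k (Suc c)) \<in> \<delta>"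
    and r_final: "\<And>k. r k (idx (Suc k) - idx k) \<in> F"
    using assms(1) by (rule omega_iter_nfa_runs) blast
  \<comment> \<open>\<open>merge\<close> takes the run on the k-th factor as a function of absolute positions\<close>
  define blk where "blk k t = (if t = idx k \<and> k = 0 then X
      else if idx k < t \<and> t < idx (Suc k) then Nfa_state (r k (t - idx k)) else Restart)" for k t
  define P where "P = merge blk idx"
  have steps: "v_step (P t) (\<beta> t) (P (Suc t))" for t
  proof -
    obtain k where t: "t \<in> {idx k..<idx (Suc k)}"
      using idx_sequence_interval[OF idx] by blast
    have "P t = blk k t"
      using merge[OF idx t] by (simp add: P_def)
    moreover have "nfa_state (blk k t) = r k (t - idx k)"
      using t r0 start(1) by (auto simp: blk_def)
    moreover have "P (Suc t) = (if Suc t = idx (Suc k) then Restart else Nfa_state (r k (Suc t - idx k)))"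
      using merge_Suc[OF idx t, of blk] t by (auto simp: P_def blk_def)
    moreover have "(r k (t - idx k), \<beta> t, r k (Suc t - idx k)) \<in> \<delta>"
      using r_step[of "t - idx k" k] t by (simp add: Suc_diff_le diff_less_mono)
    moreover have "Suc t = idx (Suc k) \<Longrightarrow> r k (Suc t - idx k) \<in> F"
      using r_final[of k] by simp
    ultimately show ?thesis
      using start(2) by (auto simp: v_step_def blk_def)
  qed
  have P0: "P 0 = X"
    using merge0[OF idx, of blk] idx by (simp add: P_def blk_def idx_sequence_def)
  have restarts: "\<exists>\<^sub>\<infinity>t. P t = Restart"
    unfolding INFM_nat
  proof
    fix m
    have "P (idx (Suc m)) = Restart"
      using merge[OF idx idx_sequence_idx[OF idx, of "Suc m"], of blk] by (simp add: P_def blk_def)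
    moreover have "m < idx (Suc m)"
      using idx_sequence_ge[OF idx, of "Suc m"] by simp
    ultimately show "\<exists>t>m. P t = Restart"
      by blast
  qed
  show ?thesis
    by (rule that[OF P0 steps restarts])
qed

lemma conc_lpba_run_phases:
  assumes R0: "R 0 = Pa_state (pa_init A)"
    and run: "\<And>t. (R t, \<alpha> t, W t, R (Suc t)) \<in> u_trans \<union> v_trans"
    and "R t0 = Restart"
  obtains n pp where "pp 0 = pa_init A" "R n = Pa_state (pp n)"
    "\<And>t. t < n \<Longrightarrow> (pp t, \<alpha> t, W t, pp (Suc t)) \<in> pa_trans A"
    "\<And>t. n \<le> t \<Longrightarrow> W t = replicate (pa_dim A) 0 \<and> v_step (R t) (\<alpha> t) (R (Suc t))"
proof -
  note u_step = conc_trans_cases(1)[OF run] and v_step_run = conc_trans_cases(2)[OF run]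
  from R0 \<open>R t0 = Restart\<close> have "\<exists>t. R (Suc t) \<notin> range Pa_state"
    by (cases t0) (auto intro!: exI[of _ "t0 - 1"])
  define n where "n = (LEAST t. R (Suc t) \<notin> range Pa_state)"
  have leave: "R (Suc n) \<notin> range Pa_state"
    unfolding n_def by (rule LeastI_ex) fact
  have in_pa: "R t \<in> range Pa_state" if "t \<le> n" for t
  proof (cases t)
    case (Suc s)
    with that show ?thesis
      using not_less_Least[of s "\<lambda>t. R (Suc t) \<notin> range Pa_state"] by (simp add: n_def)
  qed (simp add: R0)
  have out_pa: "R t \<notin> range Pa_state" if "n < t" for t
    using that
  proof (induction t)
    case (Suc t)
    show ?case
    proof (cases "t = n")
      case False
      with Suc have "R t \<notin> range Pa_state"
        by simp
      then show ?thesis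
        using u_step[of t] by auto
    qed (use leave in simp)
  qed simp
  define pp where "pp t = (case R t of Pa_state p \<Rightarrow> p | _ \<Rightarrow> 0)" for t
  have R_pp: "R t = Pa_state (pp t)" if "t \<le> n" for t
    using in_pa[OF that] by (auto simp: pp_def)
  show ?thesis
  proof (rule that)
    show "pp 0 = pa_init A"
      using R0 by (simp add: pp_def)
    show "R n = Pa_state (pp n)"
      by (rule R_pp) simp
    show "(pp t, \<alpha> t, W t, pp (Suc t)) \<in> pa_trans A" if "t < n" for t
      using u_step[of t] in_pa[of "Suc t"] that R_pp[of t] R_pp[of "Suc t"] by auto
    show "W t = replicate (pa_dim A) 0 \<and> v_step (R t) (\<alpha> t) (R (Suc t))" if "n \<le> t" for t
      using v_step_run[of t] out_pa[of "Suc t"] that by simp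
  qed
qed

lemma conc_lpba_acceptsI:
  assumes "u \<in> pa_lang A" and "\<beta> \<in> omega_iter (nfa_lang q0 \<delta> F)"
  shows "lpba_accepts conc_lpba (u \<frown> \<beta>)"
proof -
  obtain pp vs where pp0: "pp 0 = pa_init A" and len: "length vs = length u"
    and pa_run: "\<And>t. t < length u \<Longrightarrow> (pp t, u ! t, vs ! t, pp (Suc t)) \<in> pa_trans A"
    and pp_final: "pp (length u) \<in> pa_final A" and pa_acc: "vsum (pa_dim A) vs \<in> pa_constr A"
    using assms(1) unfolding pa_lang_def pa_accepts_def by blast
  obtain P where P0: "P 0 = Pa_state (pp (length u))" and v_run: "\<And>t. v_step (P t) (\<beta> t) (P (Suc t))"
    and restarts: "\<exists>\<^sub>\<infinity>t. P t = Restart"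
    by (rule v_run_of_omega_iter[OF assms(2), of "Pa_state (pp (length u))"]) (use pp_final in auto)
  define R where "R t = (if t < length u then Pa_state (pp t) else P (t - length u))" for t
  define W where "W t = (if t < length u then vs ! t else replicate (pa_dim A) 0)" for t
  have "(R t, (u \<frown> \<beta>) t, W t, R (Suc t)) \<in> u_trans \<union> v_trans" for t
  proof (cases "t < length u")
    case True
    have "R (Suc t) = Pa_state (pp (Suc t))"
    proof (cases "Suc t < length u")
      case False
      with True have "Suc t = length u"
        by simp
      with P0 show ?thesis
        by (simp add: R_def)
    qed (simp add: R_def)
    with pa_run[OF True] True show ?thesis
      by (auto simp: R_def W_def u_trans_def intro!: image_eqI[where x = "(pp t, u ! t, vs ! t, pp (Suc t))"])
  next
    case False
    then show ?thesis
      using v_run[of "t - length u"] by (auto simp: R_def W_def v_trans_def Suc_diff_le)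
  qed
  moreover have "\<exists>\<^sub>\<infinity>t. R t = Restart"
    using restarts INFM_shift[of "\<lambda>t. R t = Restart" "length u"] by (simp add: R_def)
  moreover have "rho (pa_dim A) W = map enat (vsum (pa_dim A) vs)"
  proof -
    have "map W [0..<length u] = vs"
      using len by (intro nth_equalityI) (simp_all add: W_def)
    then show ?thesis
      using rho_finite_support[of "length u" "pa_dim A" W] by (simp add: W_def)
  qed
  moreover have "R 0 = Pa_state (pa_init A)"
    using P0 pp0 by (simp add: R_def)
  ultimately show ?thesis
    using pa_acc unfolding lpba_accepts_def conc_lpba_def by (intro exI[of _ R] exI[of _ W]) auto
qed

lemma conc_lpba_acceptsD:
  assumes "lpba_accepts conc_lpba \<alpha>"
  shows "\<alpha> \<in> conc_lang (pa_lang A) (omega_iter (nfa_lang q0 \<delta> F))"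
proof -
  obtain R W where R0: "R 0 = Pa_state (pa_init A)"
    and run: "\<And>t. (R t, \<alpha> t, W t, R (Suc t)) \<in> u_trans \<union> v_trans"
    and restarts: "\<exists>\<^sub>\<infinity>t. R t = Restart" and acc: "rho (pa_dim A) W \<in> map enat ` pa_constr A"
    using assms unfolding lpba_accepts_def conc_lpba_def by auto
  obtain t0 where "R t0 = Restart"
    using restarts by (rule INFM_E)
  then obtain n pp where pp0: "pp 0 = pa_init A" and Rn: "R n = Pa_state (pp n)"
    and pa_run: "\<And>t. t < n \<Longrightarrow> (pp t, \<alpha> t, W t, pp (Suc t)) \<in> pa_trans A"
    and v_run: "\<And>t. n \<le> t \<Longrightarrow> W t = replicate (pa_dim A) 0 \<and> v_step (R t) (\<alpha> t) (R (Suc t))"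
    by (rule conc_lpba_run_phases[OF R0 run]) blast
  have "pp n \<in> pa_final A"
    using v_run[of n] Rn by (simp add: v_step_def)
  moreover have "vsum (pa_dim A) (map W [0..<n]) \<in> pa_constr A"
  proof -
    have "rho (pa_dim A) W = map enat (vsum (pa_dim A) (map W [0..<n]))"
      by (rule rho_finite_support) (simp add: v_run)
    moreover have "inj (map enat)"
      by (rule inj_mapI) (rule injI, simp)
    ultimately show ?thesis
      using acc by (simp add: inj_image_mem_iff)
  qed
  ultimately have "prefix n \<alpha> \<in> pa_lang A"
    unfolding pa_lang_def pa_accepts_def using pp0 pa_run
    by (intro CollectI exI[of _ pp] exI[of _ "map W [0..<n]"]) simp
  moreover have "suffix n \<alpha> \<in> omega_iter (nfa_lang q0 \<delta> F)"
  proof (rule omega_iter_of_v_run[where R = "\<lambda>t. R (n + t)"])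
    show "v_step (R (n + t)) (suffix n \<alpha> t) (R (n + Suc t))" for t
      using v_run[of "n + t"] by simp
    show "\<exists>\<^sub>\<infinity>t. R (n + t) = Restart"
      using restarts INFM_shift[of "\<lambda>t. R t = Restart" n] by simp
  qed (simp add: Rn)
  ultimately show ?thesis
    unfolding conc_lang_def using prefix_suffix[of \<alpha> n] by blast
qed

lemma lpba_lang_conc_lpba: "lpba_lang conc_lpba = conc_lang (pa_lang A) (omega_iter (nfa_lang q0 \<delta> F))"
  unfolding lpba_lang_def using conc_lpba_acceptsD conc_lpba_acceptsI by (auto simp: conc_lang_def)

end

lemma lpba_recognizable_conc_omega_iter:
  fixes \<Sigma> :: "'a set"
  assumes "finite \<Sigma>" and "parikh_recognizable \<Sigma> U" and "regular \<Sigma> V"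
  shows "lpba_recognizable \<Sigma> (conc_lang U (omega_iter V))"
proof -
  obtain A :: "(nat, 'a) pa" where A: "is_pa \<Sigma> A" "pa_lang A = U"
    using assms(2) unfolding parikh_recognizable_def by blast
  obtain Q q0 \<delta> F where nfa: "finite Q" "q0 \<in> Q" "F \<subseteq> Q" "\<delta> \<subseteq> Q \<times> \<Sigma> \<times> Q"
    and V: "V = nfa_lang q0 \<delta> F"
    using assms(3) unfolding regular_def nfa_lang_def by blast
  interpret pa_nfa \<Sigma> A Q q0 \<delta> F
    using assms(1) A(1) nfa by unfold_locales
  show ?thesis
    using lpba_recognizable_lpba_lang[OF is_lpba_conc_lpba] by (simp add: lpba_lang_conc_lpba A(2) V)
qed

theorem lemma5:
  fixes \<Sigma> :: "'a set" and n :: nat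
    and U V :: "nat \<Rightarrow> 'a list set" and L :: "'a word set"
  assumes "finite \<Sigma>"
    and "\<forall>i \<in> {1..n}. parikh_recognizable \<Sigma> (U i)"
    and "\<forall>i \<in> {1..n}. regular \<Sigma> (V i)"
    and "L = (\<Union>i \<in> {1..n}. conc_lang (U i) (omega_iter (V i)))"
  shows "lpba_recognizable \<Sigma> L"
  using assms(1-3) unfolding assms(4)
  by (intro lpba_recognizable_UN lpba_recognizable_conc_omega_iter) auto

end
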